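(* Let $k\geq 1$ be an integer. (i) Let $r=2k+1$ and let $1\leq i_1<i_2<\cdots<i_r$ be integers. Then \[ \int_{[0,1]^{i_r}}\frac{dx_1\cdots dx_{i_r}}{1-x_1\cdots x_{i_1}+x_1\cdots x_{i_2}-\cdots+(-1)^r x_1\cdots x_{i_r}} =\zeta^{\star}\big(i_1+1,\{1\}^{i_2-i_1-1},\,i_3-i_2+1,\{1\}^{i_4-i_3-1},\,\ldots,\,i_{2k-1}-i_{2k-2}+1,\{1\}^{i_{2k}-i_{2k-1}-1},\,i_{2k+1}-i_{2k}\big). \] (ii) Let $r=2k$ and let $1\leq i_1<i_2<\cdots<i_r$ be integers. Then \[ \int_{[0,1]^{i_r}}\frac{dx_1\cdots dx_{i_r}}{1-x_1\cdots x_{i_1}+x_1\cdots x_{i_2}-\cdots+(-1)^r x_1\cdots x_{i_r}} =\zeta^{\star}\big(i_1+1,\{1\}^{i_2-i_1-1},\,i_3-i_2+1,\{1\}^{i_4-i_3-1},\,\ldots,\,i_{2k-1}-i_{2k-2}+1,\{1\}^{i_{2k}-i_{2k-1}-1}\big). \] Here the denominator is $1+\sum_{j=1}^{r}(-1)^j\prod_{m=1}^{i_j}x_m$.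
   Context: For integers $k_1\geq 2$ and $k_2,\ldots,k_r\geq 1$, the multiple zeta-star value is $\zeta^{\star}(k_1,\ldots,k_r)=\sum_{n_1\geq n_2\geq\cdots\geq n_r\geq 1}\frac{1}{n_1^{k_1}\cdots n_r^{k_r}}$. The notation $\{1\}^{l}$ denotes $l$ consecutive arguments equal to $1$ (nothing if $l=0$). In the argument lists, the pattern "$i_{2j-1}-i_{2j-2}+1,\{1\}^{i_{2j}-i_{2j-1}-1}$" is repeated for $j=2,\ldots,k$ after the initial block $i_1+1,\{1\}^{i_2-i_1-1}$ (so e.g. for $k=1$ in (i) the list is $(i_1+1,\{1\}^{i_2-i_1-1},i_3-i_2)$). *)

theory Defs
  imports "HOL-Analysis.Analysis"
begin

definition zeta_star :: "nat list \<Rightarrow> real" where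
  "zeta_star ks = infsum (\<lambda>ns. \<Prod>j<length ks. 1 / real (ns ! j) ^ (ks ! j))
     {ns :: nat list. length ns = length ks \<and> sorted_wrt (\<ge>) ns \<and> (\<forall>n\<in>set ns. 1 \<le> n)}"

text \<open>The initial blocks of the argument list, for j = 1..k:
  i_{2j-1} - i_{2j-2} + 1, {1}^(i_{2j} - i_{2j-1} - 1), with the convention i_0 = 0.\<close>
definition zs_blocks :: "nat \<Rightarrow> (nat \<Rightarrow> nat) \<Rightarrow> nat list" where
  "zs_blocks k i = concat (map (\<lambda>j.
       (i (2*j-1) - (if 2*j-2 = 0 then 0 else i (2*j-2)) + 1)
       # replicate (i (2*j) - i (2*j-1) - 1) 1) [1..<k+1])"

text \<open>The integral over the unit cube [0,1]^n of x_1,...,x_n (coordinates x 0,...,x (n-1)),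
  with respect to Lebesgue measure, of the reciprocal of
  1 + sum_{j=1}^r (-1)^j x_1...x_{i_j}, where n = i_r.\<close>
definition cube_integral :: "nat \<Rightarrow> (nat \<Rightarrow> nat) \<Rightarrow> ennreal" where
  "cube_integral r i =
     (\<integral>\<^sup>+ x. ennreal (1 / (1 + (\<Sum>j=1..r. (-1) ^ j * (\<Prod>m<i j. x m))))
        \<partial>(PiM {..<i r} (\<lambda>_. restrict_space lborel {0..1::real})))"

end

theory Submission
  imports Defs
begin

(* Written in Horner form, the denominator is
     Q = 1 - x_1...x_{i_1} (1 - x_{i_1+1}...x_{i_2} (1 - ... )),
   with 0 < Q <= 1 off the null set {x_1 = 1}. There 1/Q is the geometric series in 1 - Q, so
   the integral is the sum over a of the integrals of (1 - Q)^a. Integrating out one coordinate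
   at a time with  int_0^1 (y c)^a dy = c^a / (a + 1)  and
   int_0^1 (1 - y c)^a dy = (sum_{j <= a} (1 - c)^j) / (a + 1)  turns these moments into
   iterated sums: a coordinate outside the breakpoints divides by a + 1, while at a breakpoint
   a new sum over j <= a begins. Hence the partial sums of the moments are the truncations of
   the zeta-star series at n_1 <= a + 1, every pair of consecutive factors (1 - ...) producing
   one block i_{2j-1} - i_{2j-2} + 1, {1}^{i_{2j} - i_{2j-1} - 1}. Since the first argument
   i_1 + 1 is at least 2, the truncations are bounded, and their supremum is the zeta-star
   value. *)

section \<open>Integrals over the unit interval\<close>

abbreviation lborel_unit :: "real measure" where
  "lborel_unit \<equiv> restrict_space lborel {0..1}"

lemma product_sigma_finite_lborel_unit: "product_sigma_finite (\<lambda>_. lborel_unit)"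
  unfolding product_sigma_finite_def
  by (auto intro: sigma_finite_measure_restrict_space lborel.sigma_finite_measure_axioms)

lemma space_PiM_lborel_unit: "x \<in> space (PiM I (\<lambda>_. lborel_unit)) \<Longrightarrow> j \<in> I \<Longrightarrow> x j \<in> {0..1}"
  by (auto simp: space_PiM space_restrict_space)

lemma AE_PiM_lborel_unit_component_neq:
  assumes "j \<in> I" "finite I"
  shows "AE x in PiM I (\<lambda>_. lborel_unit). x j \<noteq> c"
proof -
  define N where "N = Pi\<^sub>E I (\<lambda>l. if l = j then {c} \<inter> {0..1} else {0..1})"
  have "emeasure (PiM I (\<lambda>_. lborel_unit)) N
      = (\<Prod>l\<in>I. emeasure lborel_unit (if l = j then {c} \<inter> {0..1} else {0..1}))"
    unfolding N_def using assms
    by (intro product_sigma_finite.emeasure_PiM[OF product_sigma_finite_lborel_unit])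
      (auto simp: sets_restrict_space_iff)
  also have "\<dots> = 0"
    using assms by (intro prod_zero bexI[of _ j]) (auto simp: emeasure_restrict_space Int_insert_left)
  finally have "N \<in> null_sets (PiM I (\<lambda>_. lborel_unit))"
    unfolding N_def using assms
    by (auto intro!: sets_PiM_I_finite simp: null_sets_def sets_restrict_space_iff)
  then show ?thesis
    by (rule AE_I') (auto simp: N_def space_PiM space_restrict_space)
qed

lemma nn_integral_lborel_unit_has_integral:
  assumes "(f has_integral I) {0..1}" "\<And>y. y \<in> {0..1} \<Longrightarrow> 0 \<le> f y"
  shows "(\<integral>\<^sup>+y. ennreal (f y) \<partial>lborel_unit) = ennreal I"
  using nn_integral_has_integral_lebesgue'[OF _ assms(1)] assms(2)
  by (subst nn_integral_restrict_space) (auto simp: indicator_def)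

lemma nn_integral_lborel_unit_power:
  fixes c :: real
  assumes "0 \<le> c"
  shows "(\<integral>\<^sup>+y. ennreal ((y * c) ^ a) \<partial>lborel_unit) = ennreal (c ^ a / (real a + 1))"
proof (rule nn_integral_lborel_unit_has_integral)
  have "((\<lambda>y. c ^ a / (a + 1) * y ^ Suc a) has_real_derivative (y * c) ^ a) (at y within {0..1})"
    for y :: real
    by (rule DERIV_cong[OF DERIV_cmult[OF DERIV_pow]]) (simp add: power_mult_distrib)
  then show "((\<lambda>y. (y * c) ^ a) has_integral c ^ a / (real a + 1)) {0..1}"
    using fundamental_theorem_of_calculus[of 0 1 "\<lambda>y. c ^ a / (a + 1) * y ^ Suc a"]
    by (simp add: has_real_derivative_iff_has_vector_derivative add.commute)
qed (use assms in auto)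

lemma nn_integral_lborel_unit_one_minus_power:
  fixes c :: real
  assumes "0 \<le> c" "c \<le> 1"
  shows "(\<integral>\<^sup>+y. ennreal ((1 - y * c) ^ a) \<partial>lborel_unit) = ennreal ((\<Sum>j\<le>a. (1 - c) ^ j) / (real a + 1))"
proof (rule nn_integral_lborel_unit_has_integral)
  show "((\<lambda>y. (1 - y * c) ^ a) has_integral (\<Sum>j\<le>a. (1 - c) ^ j) / (real a + 1)) {0..1}"
  proof (cases "c = 0")
    case True
    then show ?thesis using has_integral_const_real[of 1 0 1] by (simp add: add.commute)
  next
    case False
    define F where "F = (\<lambda>y. - 1 / (c * (a + 1)) * (1 - y * c) ^ Suc a)"
    have "(F has_real_derivative (1 - y * c) ^ a) (at y within {0..1})" for y
    proof -
      have "((\<lambda>y. 1 - y * c) has_real_derivative - c) (at y within {0..1})"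
        using DERIV_diff[OF DERIV_const DERIV_cmult_right[OF DERIV_ident], of 1 c y] by simp
      moreover have "0 < c + c * real a"
        using False assms(1) by (simp add: add_pos_nonneg)
      ultimately show ?thesis
        unfolding F_def by (intro DERIV_cong[OF DERIV_cmult[OF DERIV_power]]) (auto simp: field_simps)
    qed
    then have "((\<lambda>y. (1 - y * c) ^ a) has_integral F 1 - F 0) {0..1}"
      by (intro fundamental_theorem_of_calculus) (auto simp: has_real_derivative_iff_has_vector_derivative)
    moreover have "F 1 - F 0 = (1 - (1 - c) ^ Suc a) / (c * (a + 1))"
      by (simp add: F_def diff_divide_distrib)
    also have "\<dots> = (\<Sum>j\<le>a. (1 - c) ^ j) / (real a + 1)"
      unfolding one_diff_power_eq lessThan_Suc_atMost using False by simp
    ultimately show ?thesis by simp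
  qed
qed (use assms in \<open>auto intro!: zero_le_power simp: mult_le_one\<close>)

section \<open>The denominator in nested form\<close>

(* B marks the coordinates at which a new factor (1 - ...) opens; nested_denom B n m x is the
   nested expression in the coordinates m, ..., n - 1 (0-based: x m stands for x_{m+1}). *)
function nested_denom :: "nat set \<Rightarrow> nat \<Rightarrow> nat \<Rightarrow> (nat \<Rightarrow> real) \<Rightarrow> real" where
  "nested_denom B n m x =
     (if n \<le> m then 1
      else if m \<in> B then 1 - x m * nested_denom B n (Suc m) x
      else x m * nested_denom B n (Suc m) x)"
  by auto
termination by (relation "Wellfounded.measure (\<lambda>(B, n, m, x). n - m)") auto

declare nested_denom.simps [simp del]

lemma nested_denom_base [simp]: "n \<le> m \<Longrightarrow> nested_denom B n m x = 1"
  by (simp add: nested_denom.simps)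

lemma nested_denom_Suc:
  "m < n \<Longrightarrow> nested_denom B n m x =
     (if m \<in> B then 1 - x m * nested_denom B n (Suc m) x else x m * nested_denom B n (Suc m) x)"
  by (simp add: nested_denom.simps)

lemma nested_denom_fun_upd: "j < m \<Longrightarrow> nested_denom B n m (x(j := y)) = nested_denom B n m x"
  by (induction B n m x rule: nested_denom.induct) (simp add: nested_denom.simps)

lemma nested_denom_bounds:
  "(\<And>j. m \<le> j \<Longrightarrow> j < n \<Longrightarrow> x j \<in> {0..1}) \<Longrightarrow> nested_denom B n m x \<in> {0..1}"
proof (induction B n m x rule: nested_denom.induct)
  case (1 B n m x)
  show ?case
  proof (cases "n \<le> m")
    case False
    then have "nested_denom B n (Suc m) x \<in> {0..1}" "x m \<in> {0..1}"
      using 1 by (cases "m \<in> B"; auto)+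
    then have "x m * nested_denom B n (Suc m) x \<in> {0..1}"
      by (auto intro: mult_le_one)
    then show ?thesis
      using False by (simp add: nested_denom_Suc)
  qed (simp add: nested_denom.simps)
qed

lemma nested_denom_in_unit:
  "x \<in> space (PiM I (\<lambda>_. lborel_unit)) \<Longrightarrow> {m..<n} \<subseteq> I \<Longrightarrow> nested_denom B n m x \<in> {0..1}"
  by (intro nested_denom_bounds space_PiM_lborel_unit) auto

lemma nested_denom_pos:
  assumes "m \<in> B" "m < n" "x m \<in> {0..<1}" "\<And>j. m < j \<Longrightarrow> j < n \<Longrightarrow> x j \<in> {0..1}"
  shows "0 < nested_denom B n m x"
proof -
  have "nested_denom B n (Suc m) x \<le> 1"
    using nested_denom_bounds[of "Suc m" n x B] assms(4) by auto
  then have "x m * nested_denom B n (Suc m) x < 1"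
    using assms(3) mult_left_le[of "nested_denom B n (Suc m) x" "x m"] by auto
  then show ?thesis
    using assms(1,2) by (simp add: nested_denom_Suc)
qed

lemma borel_measurable_nested_denom:
  "{m..<n} \<subseteq> I \<Longrightarrow> nested_denom B n m \<in> borel_measurable (PiM I (\<lambda>_. lborel_unit))"
proof (induction "n - m" arbitrary: m)
  case 0
  then show ?case by (simp add: nested_denom.simps)
next
  case (Suc d)
  then have "m < n" "m \<in> I" "{Suc m..<n} \<subseteq> I" by auto
  have "(\<lambda>x. x m) \<in> borel_measurable (PiM I (\<lambda>_. lborel_unit))"
    using measurable_component_singleton[OF \<open>m \<in> I\<close>, of "\<lambda>_. lborel_unit"]
    by (simp add: measurable_restrict_space2_iff)
  moreover have "nested_denom B n (Suc m) \<in> borel_measurable (PiM I (\<lambda>_. lborel_unit))"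
    using Suc.hyps \<open>{Suc m..<n} \<subseteq> I\<close> by simp
  moreover have "nested_denom B n m =
      (\<lambda>x. if m \<in> B then 1 - x m * nested_denom B n (Suc m) x else x m * nested_denom B n (Suc m) x)"
    using \<open>m < n\<close> by (simp add: nested_denom_Suc fun_eq_iff)
  ultimately show ?case
    by simp
qed

lemma nested_denom_gap:
  assumes "p \<le> q" "q \<le> n" "{p..<q} \<inter> B = {}"
  shows "nested_denom B n p x = (\<Prod>m\<in>{p..<q}. x m) * nested_denom B n q x"
  using assms
proof (induction q rule: dec_induct)
  case (step k)
  moreover have "{p..<k} \<inter> B = {}"
    using step.prems by (auto simp: disjoint_iff)
  ultimately have "nested_denom B n p x = (\<Prod>m\<in>{p..<k}. x m) * nested_denom B n k x"
    by simp
  moreover have "nested_denom B n k x = x k * nested_denom B n (Suc k) x"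
    using step by (auto simp: nested_denom_Suc[of k])
  ultimately show ?case
    using step by (simp add: prod.atLeastLessThan_Suc)
qed simp

locale strict_chain =
  fixes ii :: "nat \<Rightarrow> nat" and r :: nat
  assumes chain_step: "j < r \<Longrightarrow> ii j < ii (Suc j)"
begin

abbreviation breaks :: "nat set" where
  "breaks \<equiv> ii ` {..<r}"

lemma chain_less: "j < l \<Longrightarrow> l \<le> r \<Longrightarrow> ii j < ii l"
  by (rule lift_Suc_mono_less_ivl[of "{..<r}"]) (auto intro: chain_step)

lemma chain_le: "j \<le> l \<Longrightarrow> l \<le> r \<Longrightarrow> ii j \<le> ii l"
  using chain_less[of j l] by (cases "j = l") auto

lemma chain_gap:
  assumes "j < r"
  shows "{Suc (ii j)..<ii (Suc j)} \<inter> breaks = {}"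
proof -
  have False if "l < r" "ii j < ii l" "ii l < ii (Suc j)" for l
    using chain_le[of l j] chain_le[of "Suc j" l] that assms by (cases "l \<le> j") auto
  then show ?thesis
    by fastforce
qed

lemma nested_denom_chain_step:
  assumes "l < r"
  shows "nested_denom breaks (ii r) (ii l) x
           = 1 - (\<Prod>m\<in>{ii l..<ii (Suc l)}. x m) * nested_denom breaks (ii r) (ii (Suc l)) x"
proof -
  have "ii l < ii (Suc l)" "ii (Suc l) \<le> ii r"
    using assms chain_step chain_le by auto
  then show ?thesis
    using assms chain_gap[OF assms] nested_denom_gap[of "Suc (ii l)" "ii (Suc l)" "ii r" breaks x]
    by (simp add: nested_denom_Suc prod.atLeast_Suc_lessThan mult.assoc)
qed

lemma alternating_sum_eq_nested_denom:
  assumes "l \<le> r"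
  shows "(\<Sum>j=l..r. (-1) ^ j * (\<Prod>m<ii j. x m))
           = (-1) ^ l * (\<Prod>m<ii l. x m) * nested_denom breaks (ii r) (ii l) x"
  using assms
proof (induction l rule: inc_induct)
  case (step l)
  have "(\<Prod>m<ii (Suc l). x m) = (\<Prod>m<ii l. x m) * (\<Prod>m\<in>{ii l..<ii (Suc l)}. x m)"
    using chain_step[of l] step.hyps
    by (simp add: lessThan_atLeast0 prod.atLeastLessThan_concat)
  then show ?case
    using step by (simp add: sum.atLeast_Suc_atMost nested_denom_chain_step algebra_simps)
qed simp

end

(* The convention i_0 = 0 turns the leading 1 of the denominator into the term j = 0 of the
   alternating sum. *)
lemma strict_chain_zero_extend:
  "1 \<le> i 1 \<Longrightarrow> \<forall>j\<in>{1..<r}. i j < i (Suc j) \<Longrightarrow> strict_chain (i(0 := 0)) r"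
  by unfold_locales (auto simp: less_Suc_eq_0_disj)

lemma cube_integral_eq_nn_integral_nested_denom:
  assumes "1 \<le> r" "1 \<le> i 1" "\<forall>j\<in>{1..<r}. i j < i (Suc j)"
  shows "cube_integral r i
           = (\<integral>\<^sup>+x. ennreal (1 / nested_denom (i(0 := 0) ` {..<r}) (i r) 0 x) \<partial>PiM {..<i r} (\<lambda>_. lborel_unit))"
proof -
  interpret strict_chain "i(0 := 0)" r
    using assms(2,3) by (rule strict_chain_zero_extend)
  have "1 + (\<Sum>j=1..r. (-1) ^ j * (\<Prod>m<i j. x m)) = nested_denom breaks (i r) 0 x" for x :: "nat \<Rightarrow> real"
    using alternating_sum_eq_nested_denom[of 0 x] assms(1) by (simp add: sum.atLeast_Suc_atMost)
  then show ?thesis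
    unfolding cube_integral_def by simp
qed

section \<open>Moments of the nested denominator\<close>

lemma nn_integral_PiM_lborel_unit_first_coordinate:
  fixes g :: "(nat \<Rightarrow> real) \<Rightarrow> real"
  assumes "m < n"
    and g_meas: "g \<in> borel_measurable (PiM {Suc m..<n} (\<lambda>_. lborel_unit))"
    and g_upd: "\<And>x y. g (x(m := y)) = g x"
    and g_bounds: "\<And>x. x \<in> space (PiM {Suc m..<n} (\<lambda>_. lborel_unit)) \<Longrightarrow> g x \<in> {0..1}"
  shows "(\<integral>\<^sup>+x. ennreal ((x m * g x) ^ a) \<partial>PiM {m..<n} (\<lambda>_. lborel_unit))
           = ennreal (1 / (real a + 1)) * (\<integral>\<^sup>+x. ennreal (g x ^ a) \<partial>PiM {Suc m..<n} (\<lambda>_. lborel_unit))"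
    and "(\<integral>\<^sup>+x. ennreal ((1 - x m * g x) ^ a) \<partial>PiM {m..<n} (\<lambda>_. lborel_unit))
           = ennreal (1 / (real a + 1))
             * (\<Sum>j\<le>a. \<integral>\<^sup>+x. ennreal ((1 - g x) ^ j) \<partial>PiM {Suc m..<n} (\<lambda>_. lborel_unit))"
proof -
  let ?M = "\<lambda>J. PiM J (\<lambda>_::nat. lborel_unit)"
  let ?I = "{Suc m..<n}"
  have ins: "{m..<n} = insert m ?I"
    using \<open>m < n\<close> by auto
  have "(\<lambda>x. g (restrict x ?I)) \<in> borel_measurable (?M {m..<n})"
    using g_meas measurable_restrict_subset[of ?I "{m..<n}"] by (auto intro: measurable_comp[unfolded comp_def])
  moreover have "g (restrict x ?I) = g x" if "x \<in> space (?M {m..<n})" for x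
  proof -
    have "restrict x ?I = x(m := undefined)"
      using that by (auto simp: space_PiM PiE_def extensional_def restrict_def fun_eq_iff)
    then show ?thesis by (simp add: g_upd)
  qed
  ultimately have [measurable]: "g \<in> borel_measurable (?M {m..<n})"
    by (rule measurable_cong[THEN iffD1, rotated])
  have [measurable]: "(\<lambda>x. x m) \<in> borel_measurable (?M {m..<n})"
    using measurable_component_singleton[of m "{m..<n}" "\<lambda>_. lborel_unit"] \<open>m < n\<close>
    by (simp add: measurable_restrict_space2_iff)
  have split: "(\<integral>\<^sup>+x. ennreal (h (x m) (g x)) \<partial>?M {m..<n})
      = (\<integral>\<^sup>+x. (\<integral>\<^sup>+y. ennreal (h y (g x)) \<partial>lborel_unit) \<partial>?M ?I)"
    if "(\<lambda>x. ennreal (h (x m) (g x))) \<in> borel_measurable (?M {m..<n})" for h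
    using product_sigma_finite.product_nn_integral_insert[OF product_sigma_finite_lborel_unit _ _ that[unfolded ins]]
    by (simp add: ins g_upd)
  have "(\<integral>\<^sup>+x. ennreal ((x m * g x) ^ a) \<partial>?M {m..<n})
      = (\<integral>\<^sup>+x. ennreal (1 / (real a + 1)) * ennreal (g x ^ a) \<partial>?M ?I)"
    using g_bounds
    by (subst split) (auto intro!: nn_integral_cong simp: nn_integral_lborel_unit_power ennreal_mult'[symmetric])
  then show "(\<integral>\<^sup>+x. ennreal ((x m * g x) ^ a) \<partial>?M {m..<n})
      = ennreal (1 / (real a + 1)) * (\<integral>\<^sup>+x. ennreal (g x ^ a) \<partial>?M ?I)"
    using g_meas by (simp add: nn_integral_cmult)
  have "(\<integral>\<^sup>+x. ennreal ((1 - x m * g x) ^ a) \<partial>?M {m..<n})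
      = (\<integral>\<^sup>+x. ennreal (1 / (real a + 1)) * (\<Sum>j\<le>a. ennreal ((1 - g x) ^ j)) \<partial>?M ?I)"
    using g_bounds
    by (subst split) (auto intro!: nn_integral_cong
        simp: nn_integral_lborel_unit_one_minus_power ennreal_mult'[symmetric])
  then show "(\<integral>\<^sup>+x. ennreal ((1 - x m * g x) ^ a) \<partial>?M {m..<n})
      = ennreal (1 / (real a + 1)) * (\<Sum>j\<le>a. \<integral>\<^sup>+x. ennreal ((1 - g x) ^ j) \<partial>?M ?I)"
    using g_meas by (simp add: nn_integral_cmult nn_integral_sum)
qed

(* The integrals of nested_denom B n m ^ a and (1 - nested_denom B n m) ^ a over the coordinates
   m, ..., n - 1, obtained by integrating out x m first (nn_integral_nested_denom_power). *)
function nested_moment :: "nat set \<Rightarrow> nat \<Rightarrow> nat \<Rightarrow> nat \<Rightarrow> real"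
     and compl_moment :: "nat set \<Rightarrow> nat \<Rightarrow> nat \<Rightarrow> nat \<Rightarrow> real" where
  "nested_moment B n m a =
     (if n \<le> m then 1
      else if m \<in> B then (\<Sum>j\<le>a. compl_moment B n (Suc m) j) / (real a + 1)
      else nested_moment B n (Suc m) a / (real a + 1))"
| "compl_moment B n m a =
     (if n \<le> m then 0 ^ a
      else if m \<in> B then nested_moment B n (Suc m) a / (real a + 1)
      else (\<Sum>j\<le>a. compl_moment B n (Suc m) j) / (real a + 1))"
  by pat_completeness auto
termination
  by (relation "Wellfounded.measure (case_sum (\<lambda>(B, n, m, a). n - m) (\<lambda>(B, n, m, a). n - m))") auto

declare nested_moment.simps [simp del] compl_moment.simps [simp del]

lemma moments_base [simp]:
  "n \<le> m \<Longrightarrow> nested_moment B n m a = 1"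
  "n \<le> m \<Longrightarrow> compl_moment B n m a = 0 ^ a"
  by (simp_all add: nested_moment.simps compl_moment.simps)

lemma moments_Suc:
  "m < n \<Longrightarrow> nested_moment B n m a =
     (if m \<in> B then (\<Sum>j\<le>a. compl_moment B n (Suc m) j) / (real a + 1)
      else nested_moment B n (Suc m) a / (real a + 1))"
  "m < n \<Longrightarrow> compl_moment B n m a =
     (if m \<in> B then nested_moment B n (Suc m) a / (real a + 1)
      else (\<Sum>j\<le>a. compl_moment B n (Suc m) j) / (real a + 1))"
  by (simp_all add: nested_moment.simps compl_moment.simps)

lemma moments_nonneg: "0 \<le> nested_moment B n m a" "0 \<le> compl_moment B n m a"
proof (induction B n m a and B n m a rule: nested_moment_compl_moment.induct)
  case (1 B n m a)
  then show ?case by (subst nested_moment.simps) (auto intro!: divide_nonneg_nonneg sum_nonneg)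
next
  case (2 B n m a)
  then show ?case by (subst compl_moment.simps) (auto intro!: divide_nonneg_nonneg sum_nonneg)
qed

lemma nn_integral_nested_denom_Suc:
  assumes "m < n"
  shows "(\<integral>\<^sup>+x. ennreal ((x m * nested_denom B n (Suc m) x) ^ a) \<partial>PiM {m..<n} (\<lambda>_. lborel_unit))
           = ennreal (1 / (real a + 1))
             * (\<integral>\<^sup>+x. ennreal (nested_denom B n (Suc m) x ^ a) \<partial>PiM {Suc m..<n} (\<lambda>_. lborel_unit))"
    and "(\<integral>\<^sup>+x. ennreal ((1 - x m * nested_denom B n (Suc m) x) ^ a) \<partial>PiM {m..<n} (\<lambda>_. lborel_unit))
           = ennreal (1 / (real a + 1))
             * (\<Sum>j\<le>a. \<integral>\<^sup>+x. ennreal ((1 - nested_denom B n (Suc m) x) ^ j) \<partial>PiM {Suc m..<n} (\<lambda>_. lborel_unit))"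
  using nn_integral_PiM_lborel_unit_first_coordinate[of m n "nested_denom B n (Suc m)", OF assms
      borel_measurable_nested_denom[OF order_refl] nested_denom_fun_upd[OF lessI] nested_denom_in_unit[OF _ order_refl]]
  by auto

lemma nn_integral_nested_denom_power:
  "(\<integral>\<^sup>+x. ennreal (nested_denom B n m x ^ a) \<partial>PiM {m..<n} (\<lambda>_. lborel_unit))
     = ennreal (nested_moment B n m a)"
  "(\<integral>\<^sup>+x. ennreal ((1 - nested_denom B n m x) ^ a) \<partial>PiM {m..<n} (\<lambda>_. lborel_unit))
     = ennreal (compl_moment B n m a)"
proof (induction B n m a and B n m a rule: nested_moment_compl_moment.induct)
  case (1 B n m a)
  then show ?case
    using moments_nonneg
    by (cases "m < n"; cases "m \<in> B")
      (simp_all add: nested_denom_Suc moments_Suc nn_integral_nested_denom_Suc ennreal_mult'[symmetric]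
        sum_nonneg PiM_empty nn_integral_count_space_finite)
next
  case (2 B n m a)
  then show ?case
    using moments_nonneg
    by (cases "m < n"; cases "m \<in> B")
      (simp_all add: nested_denom_Suc moments_Suc nn_integral_nested_denom_Suc ennreal_mult'[symmetric]
        sum_nonneg PiM_empty nn_integral_count_space_finite)
qed

lemma ennreal_inverse_eq_suminf_geometric:
  fixes q :: real
  assumes "0 < q" "q \<le> 1"
  shows "ennreal (1 / q) = (\<Sum>a. ennreal ((1 - q) ^ a))"
proof -
  have "(\<lambda>a. (1 - q) ^ a) sums (1 / q)"
    using geometric_sums[of "1 - q"] assms by simp
  then show ?thesis
    using assms by (simp add: suminf_ennreal2 sums_summable sums_unique[symmetric])
qed

(* Since 0 is a breakpoint, Q = 1 - x 0 * (...) vanishes only on the null set {x 0 = 1}. *)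
lemma nn_integral_inverse_nested_denom:
  assumes "0 \<in> B" "0 < n"
  shows "(\<integral>\<^sup>+x. ennreal (1 / nested_denom B n 0 x) \<partial>PiM {..<n} (\<lambda>_. lborel_unit))
           = (\<Sum>a. ennreal (compl_moment B n 0 a))"
proof -
  let ?M = "PiM {..<n} (\<lambda>_. lborel_unit)"
  have "AE x in ?M. x 0 \<noteq> 1"
    using assms(2) by (intro AE_PiM_lborel_unit_component_neq) auto
  then have "AE x in ?M. ennreal (1 / nested_denom B n 0 x) = (\<Sum>a. ennreal ((1 - nested_denom B n 0 x) ^ a))"
  proof (rule AE_mp, intro AE_I2 impI ennreal_inverse_eq_suminf_geometric)
    fix x assume x: "x \<in> space ?M" "x 0 \<noteq> 1"
    have unit: "x j \<in> {0..1}" if "j < n" for j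
      using space_PiM_lborel_unit[OF x(1)] that by simp
    moreover have "x 0 \<in> {0..<1}"
      using unit[of 0] assms(2) x(2) by auto
    ultimately show "0 < nested_denom B n 0 x"
      using assms by (intro nested_denom_pos) auto
    show "nested_denom B n 0 x \<le> 1"
      using nested_denom_in_unit[OF x(1), of 0 n B] by (simp add: atLeast0LessThan)
  qed
  then have "(\<integral>\<^sup>+x. ennreal (1 / nested_denom B n 0 x) \<partial>?M)
      = (\<integral>\<^sup>+x. (\<Sum>a. ennreal ((1 - nested_denom B n 0 x) ^ a)) \<partial>?M)"
    by (rule nn_integral_cong_AE)
  also have "\<dots> = (\<Sum>a. \<integral>\<^sup>+x. ennreal ((1 - nested_denom B n 0 x) ^ a) \<partial>?M)"
  proof (rule nn_integral_suminf)
    have [measurable]: "nested_denom B n 0 \<in> borel_measurable ?M"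
      by (rule borel_measurable_nested_denom) auto
    show "(\<lambda>x. ennreal ((1 - nested_denom B n 0 x) ^ a)) \<in> borel_measurable ?M" for a
      by measurable
  qed
  also have "\<dots> = (\<Sum>a. ennreal (compl_moment B n 0 a))"
    using nn_integral_nested_denom_power(2)[where B = B and n = n and m = 0] by (simp add: atLeast0LessThan)
  finally show ?thesis .
qed

section \<open>Truncated multiple zeta-star values\<close>

definition zeta_star_term :: "nat list \<Rightarrow> nat list \<Rightarrow> real" where
  "zeta_star_term ks ns = (\<Prod>j<length ks. 1 / real (ns ! j) ^ (ks ! j))"

definition zeta_star_indices :: "nat \<Rightarrow> nat \<Rightarrow> nat list set" where
  "zeta_star_indices r N = {ns. length ns = r \<and> sorted_wrt (\<ge>) ns \<and> (\<forall>n\<in>set ns. 1 \<le> n \<and> n \<le> N)}"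

definition zeta_star_partial :: "nat list \<Rightarrow> nat \<Rightarrow> real" where
  "zeta_star_partial ks N = (\<Sum>ns\<in>zeta_star_indices (length ks) N. zeta_star_term ks ns)"

lemma zeta_star_indices_0: "zeta_star_indices 0 N = {[]}"
  by (auto simp: zeta_star_indices_def)

lemma zeta_star_indices_Suc:
  "zeta_star_indices (Suc r) N = (\<lambda>(c, ns). Suc c # ns) ` (SIGMA c:{..<N}. zeta_star_indices r (Suc c))"
proof (intro equalityI subsetI)
  fix ns assume "ns \<in> zeta_star_indices (Suc r) N"
  then obtain n ns' where "ns = n # ns'" "1 \<le> n" "n \<le> N" "ns' \<in> zeta_star_indices r n"
    by (cases ns) (auto simp: zeta_star_indices_def)
  then show "ns \<in> (\<lambda>(c, ns). Suc c # ns) ` (SIGMA c:{..<N}. zeta_star_indices r (Suc c))"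
    by (intro image_eqI[of _ _ "(n - 1, ns')"]) auto
qed (fastforce simp: zeta_star_indices_def)

lemma finite_zeta_star_indices: "finite (zeta_star_indices r N)"
  by (induction r arbitrary: N) (auto simp: zeta_star_indices_0 zeta_star_indices_Suc)

lemma zeta_star_term_nonneg: "0 \<le> zeta_star_term ks ns"
  unfolding zeta_star_term_def by (intro prod_nonneg) auto

lemma zeta_star_term_Cons: "zeta_star_term (k # ks) (n # ns) = zeta_star_term ks ns / real n ^ k"
  unfolding zeta_star_term_def length_Cons prod.lessThan_Suc_shift by simp

lemma zeta_star_partial_nonneg: "0 \<le> zeta_star_partial ks N"
  unfolding zeta_star_partial_def by (intro sum_nonneg zeta_star_term_nonneg)

lemma zeta_star_partial_Nil [simp]: "zeta_star_partial [] N = 1"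
  by (simp add: zeta_star_partial_def zeta_star_indices_0 zeta_star_term_def)

lemma zeta_star_partial_Cons:
  "zeta_star_partial (k # ks) N = (\<Sum>c<N. zeta_star_partial ks (Suc c) / real (Suc c) ^ k)"
proof -
  have "inj_on (\<lambda>(c, ns). Suc c # ns) (SIGMA c:{..<N}. zeta_star_indices (length ks) (Suc c))"
    by (auto simp: inj_on_def)
  then have "zeta_star_partial (k # ks) N
      = (\<Sum>(c, ns)\<in>(SIGMA c:{..<N}. zeta_star_indices (length ks) (Suc c)). zeta_star_term (k # ks) (Suc c # ns))"
    by (simp add: zeta_star_partial_def zeta_star_indices_Suc sum.reindex case_prod_unfold)
  also have "\<dots> = (\<Sum>c<N. \<Sum>ns\<in>zeta_star_indices (length ks) (Suc c). zeta_star_term ks ns / real (Suc c) ^ k)"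
    by (simp add: sum.Sigma[symmetric] finite_zeta_star_indices zeta_star_term_Cons del: of_nat_Suc)
  finally show ?thesis
    by (simp add: zeta_star_partial_def sum_divide_distrib del: of_nat_Suc)
qed

(* Crude growth bounds: with all arguments >= 1 the truncations grow at most like sqrt N, so a
   first argument >= 2 keeps them bounded. *)
lemma inverse_sqrt_le_telescope: "1 / sqrt (real (Suc c)) \<le> 2 * (sqrt (real (Suc c)) - sqrt (real c))"
proof -
  define u v where "u = sqrt (real c)" and "v = sqrt (real (Suc c))"
  have u: "0 \<le> u" "u \<le> v" "0 < v" and vu: "(v - u) * (v + u) = 1"
    unfolding u_def v_def by (auto simp: algebra_simps)
  then have "1 \<le> (v - u) * (2 * v)"
    using mult_left_mono[of "v + u" "2 * v" "v - u"] by simp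
  then show ?thesis
    unfolding u_def[symmetric] v_def[symmetric] using u by (simp add: field_simps)
qed

lemma sum_inverse_sqrt_le: "(\<Sum>c<N. 1 / sqrt (real (Suc c))) \<le> 2 * sqrt (real N)"
proof -
  have "(\<Sum>c<N. 1 / sqrt (real (Suc c))) \<le> (\<Sum>c<N. 2 * (sqrt (real (Suc c)) - sqrt (real c)))"
    by (intro sum_mono inverse_sqrt_le_telescope)
  also have "\<dots> = 2 * sqrt (real N)"
    by (simp only: sum_distrib_left[symmetric] sum_lessThan_telescope[of "\<lambda>c. sqrt (real c)"]) simp
  finally show ?thesis .
qed

lemma inverse_sqrt_cube_le_telescope:
  "1 / (real (Suc c) * sqrt (real (Suc c)))
     \<le> 6 * (1 / sqrt (real (Suc c)) - 1 / sqrt (real (Suc (Suc c))))"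
proof -
  define u v where "u = sqrt (real (Suc c))" and "v = sqrt (real (Suc (Suc c)))"
  have u: "1 \<le> u" "u \<le> v" "v \<le> 2 * u" and "(v - u) * (u + v) = 1"
    unfolding u_def v_def by (auto simp: real_le_lsqrt algebra_simps)
  then have "v - u = 1 / (u + v)"
    by (simp add: eq_divide_eq)
  moreover have "1 / u - 1 / v = (v - u) / (u * v)"
    using u by (simp add: field_simps)
  ultimately have diff: "1 / u - 1 / v = 1 / (u * v * (u + v))"
    by simp
  have "u * v * (u + v) \<le> 6 * (u * u * u)"
    using mult_mono[of "u * v" "u * (2 * u)" "u + v" "3 * u"] u by (simp add: algebra_simps)
  then have "6 / (6 * (u * u * u)) \<le> 6 / (u * v * (u + v))"
    using u by (intro divide_left_mono) auto
  moreover have "real (Suc c) = u * u"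
    unfolding u_def by simp
  ultimately show ?thesis
    unfolding u_def[symmetric] v_def[symmetric] diff by simp
qed

lemma sum_inverse_sqrt_cube_le: "(\<Sum>c<N. 1 / (real (Suc c) * sqrt (real (Suc c)))) \<le> 6"
proof -
  have "(\<Sum>c<N. 1 / (real (Suc c) * sqrt (real (Suc c))))
      \<le> (\<Sum>c<N. 6 / sqrt (real (Suc c)) - 6 / sqrt (real (Suc (Suc c))))"
    using inverse_sqrt_cube_le_telescope by (intro sum_mono) (simp add: right_diff_distrib)
  also have "\<dots> = 6 - 6 / sqrt (real (Suc N))"
    by (simp only: sum_lessThan_telescope'[of "\<lambda>c. 6 / sqrt (real (Suc c))"]) simp
  also have "\<dots> \<le> 6"
    by simp
  finally show ?thesis .
qed

lemma zeta_star_partial_le_sqrt: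
  assumes "\<forall>k\<in>set ks. 1 \<le> k"
  shows "zeta_star_partial ks (Suc N) \<le> 2 ^ length ks * sqrt (real (Suc N))"
  using assms
proof (induction ks arbitrary: N)
  case Nil
  then show ?case by simp
next
  case (Cons k ks)
  have "zeta_star_partial ks (Suc c) / real (Suc c) ^ k \<le> 2 ^ length ks * (1 / sqrt (real (Suc c)))" for c
  proof -
    have "zeta_star_partial ks (Suc c) / real (Suc c) ^ k \<le> zeta_star_partial ks (Suc c) / real (Suc c)"
      using Cons.prems zeta_star_partial_nonneg
      by (intro divide_left_mono) (auto intro!: self_le_power simp del: of_nat_Suc)
    also have "\<dots> \<le> 2 ^ length ks * sqrt (real (Suc c)) / real (Suc c)"
      using Cons by (intro divide_right_mono) auto
    also have "\<dots> = 2 ^ length ks * (1 / sqrt (real (Suc c)))"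
      by (simp add: frac_eq_eq)
    finally show ?thesis .
  qed
  then have "zeta_star_partial (k # ks) (Suc N) \<le> 2 ^ length ks * (\<Sum>c<Suc N. 1 / sqrt (real (Suc c)))"
    by (simp only: zeta_star_partial_Cons sum_distrib_left sum_mono)
  also have "\<dots> \<le> 2 ^ length (k # ks) * sqrt (real (Suc N))"
    using sum_inverse_sqrt_le[of "Suc N"] by simp
  finally show ?case .
qed

lemma zeta_star_partial_le:
  assumes "2 \<le> k" "\<forall>x\<in>set ks. 1 \<le> x"
  shows "zeta_star_partial (k # ks) N \<le> 6 * 2 ^ length ks"
proof -
  have "zeta_star_partial ks (Suc c) / real (Suc c) ^ k
      \<le> 2 ^ length ks * (1 / (real (Suc c) * sqrt (real (Suc c))))" for c
  proof -
    have "zeta_star_partial ks (Suc c) / real (Suc c) ^ k \<le> zeta_star_partial ks (Suc c) / real (Suc c) ^ 2"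
      using assms zeta_star_partial_nonneg
      by (intro divide_left_mono) (auto intro!: power_increasing simp del: of_nat_Suc)
    also have "\<dots> \<le> 2 ^ length ks * sqrt (real (Suc c)) / real (Suc c) ^ 2"
      using zeta_star_partial_le_sqrt assms by (intro divide_right_mono) auto
    also have "\<dots> = 2 ^ length ks * (1 / (real (Suc c) * sqrt (real (Suc c))))"
      by (simp add: frac_eq_eq power2_eq_square)
    finally show ?thesis .
  qed
  then have "zeta_star_partial (k # ks) N \<le> 2 ^ length ks * (\<Sum>c<N. 1 / (real (Suc c) * sqrt (real (Suc c))))"
    by (simp only: zeta_star_partial_Cons sum_distrib_left sum_mono)
  also have "\<dots> \<le> 6 * 2 ^ length ks"
    using sum_inverse_sqrt_cube_le[of N] by simp
  finally show ?thesis .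
qed

lemma ennreal_zeta_star_eq_SUP:
  assumes bounded: "\<And>N. zeta_star_partial ks N \<le> C"
  shows "ennreal (zeta_star ks) = (SUP N. ennreal (zeta_star_partial ks N))"
proof -
  define S where "S = {ns :: nat list. length ns = length ks \<and> sorted_wrt (\<ge>) ns \<and> (\<forall>n\<in>set ns. 1 \<le> n)}"
  have truncated: "zeta_star_indices (length ks) N \<subseteq> S" for N
    by (auto simp: zeta_star_indices_def S_def)
  have exhaust: "\<exists>N. F \<subseteq> zeta_star_indices (length ks) N" if "finite F" "F \<subseteq> S" for F
  proof -
    obtain N where "\<forall>n\<in>(\<Union>ns\<in>F. set ns). n \<le> N"
      using \<open>finite F\<close> finite_nat_set_iff_bounded_le by (metis finite_UN finite_set)
    then show ?thesis
      using \<open>F \<subseteq> S\<close> by (intro exI[of _ N]) (auto simp: zeta_star_indices_def S_def)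
  qed
  have sum_le: "sum (zeta_star_term ks) F \<le> zeta_star_partial ks N"
    if "F \<subseteq> zeta_star_indices (length ks) N" for F N
    unfolding zeta_star_partial_def
    using that by (intro sum_mono2 finite_zeta_star_indices zeta_star_term_nonneg)
  have "zeta_star_term ks summable_on S"
  proof (rule nonneg_bdd_above_summable_on)
    show "bdd_above (sum (zeta_star_term ks) ` {F. F \<subseteq> S \<and> finite F})"
    proof (rule bdd_aboveI)
      fix y assume "y \<in> sum (zeta_star_term ks) ` {F. F \<subseteq> S \<and> finite F}"
      then obtain F N where "y = sum (zeta_star_term ks) F" "F \<subseteq> zeta_star_indices (length ks) N"
        using exhaust by blast
      then show "y \<le> C"
        using sum_le bounded order_trans by blast
    qed
  qed (rule zeta_star_term_nonneg)
  then have "ennreal (zeta_star ks) = (SUP F\<in>{F. finite F \<and> F \<subseteq> S}. ennreal (sum (zeta_star_term ks) F))"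
    unfolding zeta_star_def zeta_star_term_def[symmetric] S_def[symmetric]
    by (rule infsum_nonneg_is_SUPREMUM_ennreal) (rule zeta_star_term_nonneg)
  also have "\<dots> = (SUP N. ennreal (zeta_star_partial ks N))"
  proof (rule SUP_eq)
    show "\<exists>N\<in>UNIV. ennreal (sum (zeta_star_term ks) F) \<le> ennreal (zeta_star_partial ks N)"
      if "F \<in> {F. finite F \<and> F \<subseteq> S}" for F
      using exhaust[of F] sum_le that by (auto intro: ennreal_leI)
    show "\<exists>F\<in>{F. finite F \<and> F \<subseteq> S}. ennreal (zeta_star_partial ks N) \<le> ennreal (sum (zeta_star_term ks) F)"
      for N
      using truncated finite_zeta_star_indices unfolding zeta_star_partial_def by (intro bexI[of _ "zeta_star_indices (length ks) N"]) auto
  qed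
  finally show ?thesis .
qed

lemma suminf_eq_zeta_star:
  fixes f :: "nat \<Rightarrow> real"
  assumes "\<And>a. (\<Sum>c\<le>a. f c) = zeta_star_partial (k # ks) (Suc a)" "\<And>c. 0 \<le> f c"
    and "2 \<le> k" "\<forall>x\<in>set ks. 1 \<le> x"
  shows "(\<Sum>a. ennreal (f a)) = ennreal (zeta_star (k # ks))"
proof -
  have partial: "(\<Sum>c<N. f c) = zeta_star_partial (k # ks) N" for N
  proof (cases N)
    case 0
    then show ?thesis
      by (simp add: zeta_star_partial_Cons)
  qed (simp add: assms(1) lessThan_Suc_atMost)
  have "(\<Sum>a. ennreal (f a)) = (SUP N. \<Sum>a<N. ennreal (f a))"
    by (rule suminf_eq_SUP)
  also have "\<dots> = (SUP N. ennreal (zeta_star_partial (k # ks) N))"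
    using assms(2) by (simp add: partial[symmetric])
  also have "\<dots> = ennreal (zeta_star (k # ks))"
    using zeta_star_partial_le[OF assms(3,4)] by (rule ennreal_zeta_star_eq_SUP[symmetric])
  finally show ?thesis .
qed

section \<open>Partial sums of the moments\<close>

lemma nested_moment_gap:
  assumes "p \<le> q" "q \<le> n" "{p..<q} \<inter> B = {}"
  shows "nested_moment B n p a = nested_moment B n q a / (real a + 1) ^ (q - p)"
  using assms
proof (induction q rule: dec_induct)
  case (step k)
  moreover have "{p..<k} \<inter> B = {}"
    using step.prems by (auto simp: disjoint_iff)
  ultimately have "nested_moment B n p a = nested_moment B n k a / (real a + 1) ^ (k - p)"
    by simp
  moreover have "nested_moment B n k a = nested_moment B n (Suc k) a / (real a + 1)"
    using step by (auto simp: moments_Suc(1)[of k])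
  ultimately show ?case
    using step by (simp add: Suc_diff_le mult.commute)
qed simp

lemma compl_moment_sums_gap:
  assumes "p \<le> q" "q \<le> n" "{p..<q} \<inter> B = {}"
    and "\<And>a. (\<Sum>j\<le>a. compl_moment B n q j) = zeta_star_partial ks (Suc a)"
  shows "(\<Sum>j\<le>a. compl_moment B n p j) = zeta_star_partial (replicate (q - p) 1 @ ks) (Suc a)"
  using assms(1,3)
proof (induction p arbitrary: a rule: inc_induct)
  case base
  then show ?case using assms(4) by simp
next
  case (step p)
  then have "p \<notin> B" "p < n"
    using assms(2) by auto
  moreover have "{Suc p..<q} \<inter> B = {}"
    using step.prems by (auto simp: disjoint_iff)
  ultimately have "compl_moment B n p j
      = zeta_star_partial (replicate (q - Suc p) 1 @ ks) (Suc j) / real (Suc j)" for j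
    using step.IH by (simp add: moments_Suc(2)[of p] add.commute)
  moreover have "replicate (q - p) (1::nat) = 1 # replicate (q - Suc p) 1"
    using step by (simp add: Suc_diff_Suc[symmetric])
  ultimately show ?case
    by (simp add: zeta_star_partial_Cons lessThan_Suc_atMost del: of_nat_Suc)
qed

lemma compl_moment_sums_block:
  assumes "p \<in> B" "q \<in> B" "p < q" "q < s" "s \<le> n"
    and "{Suc p..<q} \<inter> B = {}" "{Suc q..<s} \<inter> B = {}"
    and "\<And>a. (\<Sum>j\<le>a. compl_moment B n s j) = zeta_star_partial ks (Suc a)"
  shows "(\<Sum>j\<le>a. compl_moment B n p j)
           = zeta_star_partial ((q - p + 1) # replicate (s - q - 1) 1 @ ks) (Suc a)"
proof -
  have "q - p = Suc (q - Suc p)"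
    using assms by simp
  then have "compl_moment B n p j = nested_moment B n q j / (real j + 1) ^ (q - p)" for j
    using assms nested_moment_gap[of "Suc p" q n B j]
    by (simp add: moments_Suc(2)[of p] mult.commute)
  moreover have "nested_moment B n q j = zeta_star_partial (replicate (s - q - 1) 1 @ ks) (Suc j) / (real j + 1)"
    for j
    using assms compl_moment_sums_gap[of "Suc q" s n B ks j]
    by (simp add: moments_Suc(1)[of q])
  ultimately show ?thesis
    by (simp add: zeta_star_partial_Cons lessThan_Suc_atMost mult.commute add.commute)
qed

lemma compl_moment_sums_last:
  assumes "p \<in> B" "p < n" "{Suc p..<n} \<inter> B = {}"
  shows "(\<Sum>j\<le>a. compl_moment B n p j) = zeta_star_partial [n - p] (Suc a)"
proof -
  have "n - p = Suc (n - Suc p)"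
    using assms by simp
  then have "compl_moment B n p j = 1 / (real j + 1) ^ (n - p)" for j
    using assms nested_moment_gap[of "Suc p" n n B j]
    by (simp add: moments_Suc(2)[of p] mult.commute)
  then show ?thesis
    by (simp add: zeta_star_partial_Cons lessThan_Suc_atMost add.commute)
qed

lemma compl_moment_sums_base: "(\<Sum>j\<le>a. compl_moment B n n j) = zeta_star_partial [] (Suc a)"
  by (simp add: power_0_left)

(* Numbered from 0: for ii = i(0 := 0), zs_block ii j is the block of zs_blocks with index j + 1. *)
definition zs_block :: "(nat \<Rightarrow> nat) \<Rightarrow> nat \<Rightarrow> nat list" where
  "zs_block ii j = (ii (2 * j + 1) - ii (2 * j) + 1) # replicate (ii (2 * j + 2) - ii (2 * j + 1) - 1) 1"

context strict_chain
begin

lemma compl_moment_sums_tail: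
  assumes "r = 2 * k \<or> r = 2 * k + 1"
  shows "(\<Sum>c\<le>a. compl_moment breaks (ii r) (ii (2 * k)) c)
           = zeta_star_partial (if r = 2 * k then [] else [ii r - ii (2 * k)]) (Suc a)"
  using assms
proof
  assume "r = 2 * k"
  then show ?thesis
    using compl_moment_sums_base by simp
next
  assume r: "r = 2 * k + 1"
  then have "ii (2 * k) \<in> breaks" "ii (2 * k) < ii r" "{Suc (ii (2 * k))..<ii r} \<inter> breaks = {}"
    using chain_step[of "2 * k"] chain_gap[of "2 * k"] by auto
  then show ?thesis
    using r by (simp add: compl_moment_sums_last)
qed

lemma compl_moment_sums_chain:
  assumes "2 * k \<le> r" "j \<le> k"
    and "\<And>a. (\<Sum>c\<le>a. compl_moment breaks (ii r) (ii (2 * k)) c) = zeta_star_partial ts (Suc a)"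
  shows "(\<Sum>c\<le>a. compl_moment breaks (ii r) (ii (2 * j)) c)
           = zeta_star_partial (concat (map (zs_block ii) [j..<k]) @ ts) (Suc a)"
  using assms(2)
proof (induction j arbitrary: a rule: inc_induct)
  case base
  then show ?case using assms(3) by simp
next
  case (step j)
  then have "2 * j + 2 \<le> r"
    using assms(1) by simp
  then have "ii (2 * j) \<in> breaks" "ii (2 * j + 1) \<in> breaks"
    "ii (2 * j) < ii (2 * j + 1)" "ii (2 * j + 1) < ii (2 * j + 2)" "ii (2 * j + 2) \<le> ii r"
    "{Suc (ii (2 * j))..<ii (2 * j + 1)} \<inter> breaks = {}"
    "{Suc (ii (2 * j + 1))..<ii (2 * j + 2)} \<inter> breaks = {}"
    using chain_step[of "2 * j"] chain_step[of "2 * j + 1"] chain_gap[of "2 * j"] chain_gap[of "2 * j + 1"]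
      chain_le[of "2 * j + 2" r]
    by auto
  moreover have "(\<Sum>c\<le>a. compl_moment breaks (ii r) (ii (2 * j + 2)) c)
      = zeta_star_partial (concat (map (zs_block ii) [Suc j..<k]) @ ts) (Suc a)" for a
    using step.IH[of a] by simp
  ultimately have "(\<Sum>c\<le>a. compl_moment breaks (ii r) (ii (2 * j)) c)
      = zeta_star_partial (zs_block ii j @ concat (map (zs_block ii) [Suc j..<k]) @ ts) (Suc a)"
    unfolding zs_block_def by (simp add: compl_moment_sums_block)
  then show ?case
    using step.hyps by (simp add: upt_conv_Cons)
qed

end

lemma zs_blocks_eq_concat_zs_block: "zs_blocks k i = concat (map (zs_block (i(0 := 0))) [0..<k])"
proof -
  have "[1..<k + 1] = map Suc [0..<k]"
    by (simp add: map_Suc_upt)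
  then show ?thesis
    unfolding zs_blocks_def \<open>[1..<k + 1] = map Suc [0..<k]\<close> map_map
    by (intro arg_cong[where f = concat] map_cong) (auto simp: zs_block_def)
qed

lemma zs_blocks_ge_one: "x \<in> set (zs_blocks k i) \<Longrightarrow> 1 \<le> x"
  by (auto simp: zs_blocks_def)

lemma zs_blocks_eq_Cons: "1 \<le> k \<Longrightarrow> zs_blocks k i = (i 1 + 1) # tl (zs_blocks k i)"
  by (simp add: zs_blocks_def upt_conv_Cons)

lemma cube_integral_eq_zeta_star:
  assumes k: "1 \<le> k" and r: "r = 2 * k \<or> r = 2 * k + 1"
    and i: "1 \<le> i 1" "\<forall>j\<in>{1..<r}. i j < i (Suc j)"
  defines "ts \<equiv> if r = 2 * k then [] else [i (2 * k + 1) - i (2 * k)]"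
  shows "cube_integral r i = ennreal (zeta_star (zs_blocks k i @ ts))"
proof -
  define ii where "ii = i(0 := 0)"
  interpret strict_chain ii r
    unfolding ii_def using i by (rule strict_chain_zero_extend)
  have ii: "ii 0 = 0" "ii r = i r" "ii (2 * k) = i (2 * k)"
    using k r by (auto simp: ii_def)
  have ks: "zs_blocks k i @ ts = (i 1 + 1) # (tl (zs_blocks k i) @ ts)"
    using zs_blocks_eq_Cons[OF k] by simp
  have sums: "(\<Sum>c\<le>a. compl_moment breaks (i r) 0 c) = zeta_star_partial (zs_blocks k i @ ts) (Suc a)" for a
    using compl_moment_sums_chain[of k 0, OF _ _ compl_moment_sums_tail[OF r]] r ii
    by (auto simp: ts_def zs_blocks_eq_concat_zs_block simp flip: ii_def)
  have entries: "\<forall>x\<in>set (tl (zs_blocks k i) @ ts). 1 \<le> x"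
  proof -
    have "\<forall>x\<in>set (tl (zs_blocks k i)). 1 \<le> x"
      using zs_blocks_ge_one[of _ k i] zs_blocks_eq_Cons[OF k, of i] by (metis list.set_intros(2))
    moreover have "r = 2 * k + 1 \<Longrightarrow> i (2 * k) < i (2 * k + 1)"
      using k i(2) by (auto dest: bspec[of _ _ "2 * k"])
    ultimately show ?thesis
      using r by (auto simp: ts_def)
  qed
  have "0 \<in> breaks" "0 < i r"
    using ii chain_less[of 0 r] k r by (auto intro: image_eqI[of _ _ 0])
  have "cube_integral r i = (\<integral>\<^sup>+x. ennreal (1 / nested_denom breaks (i r) 0 x) \<partial>PiM {..<i r} (\<lambda>_. lborel_unit))"
    unfolding ii_def using k r i by (intro cube_integral_eq_nn_integral_nested_denom) auto
  also have "\<dots> = (\<Sum>a. ennreal (compl_moment breaks (i r) 0 a))"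
    by (rule nn_integral_inverse_nested_denom) fact+
  also have "\<dots> = ennreal (zeta_star (zs_blocks k i @ ts))"
    unfolding ks using sums[unfolded ks] entries i(1)
    by (intro suminf_eq_zeta_star) (auto simp: moments_nonneg)
  finally show ?thesis .
qed

theorem theorem1p1:
  fixes k :: nat
  assumes "1 \<le> k"
  shows "(\<forall>i :: nat \<Rightarrow> nat. 1 \<le> i 1 \<and> (\<forall>j\<in>{1..<2*k+1}. i j < i (Suc j)) \<longrightarrow>
            cube_integral (2*k+1) i
              = ennreal (zeta_star (zs_blocks k i @ [i (2*k+1) - i (2*k)])))
       \<and> (\<forall>i :: nat \<Rightarrow> nat. 1 \<le> i 1 \<and> (\<forall>j\<in>{1..<2*k}. i j < i (Suc j)) \<longrightarrow>
            cube_integral (2*k) i = ennreal (zeta_star (zs_blocks k i)))"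
  using cube_integral_eq_zeta_star[OF assms, of "2 * k + 1"] cube_integral_eq_zeta_star[OF assms, of "2 * k"]
  by auto

end
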